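(* Let $p$ be a prime, $d\ge1$ an integer and $G\cong\mathbb{Z}_p^d$. Then for every non-empty subset $A$ of $]p-1[=\{1,\dots,p-1\}$, \[ d_A(G)\le\left\lceil\frac{d(p-1)+1}{|A|}\right\rceil . \]
   Context: For an integer $x\ge1$, $]x[=\{1,2,\dots,x\}$. Let $G$ be a finite abelian group (written additively) of exponent $n$ and let $\emptyset\ne A\subseteq\, ]n[$. The constant $d_A(G)$ is the least positive integer $t$ such that for every sequence $g_1,\dots,g_t$ of (not necessarily distinct) elements of $G$ there exist $\ell\ge1$, indices $1\le i_1<\dots<i_\ell\le t$ and elements $a_1,\dots,a_\ell\in A$ (repetitions allowed) with $\sum_{j=1}^{\ell}a_j g_{i_j}=0$ in $G$. $\lceil x\rceil$ denotes the smallest integer $\ge x$. *)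

theory Defs
  imports "HOL-Algebra.Algebra"
begin

text \<open>The constant d_A(G) for a (commutative) group G written multiplicatively in
HOL-Algebra (group operation plays the role of addition, the unit the role of 0,
and nat powers the role of integer multiples a*g).  A sequence g_1,...,g_t is
modelled by a function on the index set {..<t}.\<close>

definition dA :: "nat set \<Rightarrow> ('g, 'b) monoid_scheme \<Rightarrow> nat" where
  "dA A G = (LEAST t. t \<ge> 1 \<and>
      (\<forall>g \<in> {..<t} \<rightarrow> carrier G.
         \<exists>I. I \<subseteq> {..<t} \<and> I \<noteq> {} \<and>
           (\<exists>a \<in> I \<rightarrow> A. finprod G (\<lambda>i. g i [^]\<^bsub>G\<^esub> a i) I = \<one>\<^bsub>G\<^esub>)))"

definition Zpd :: "nat \<Rightarrow> nat \<Rightarrow> (nat \<Rightarrow> int) monoid" where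
  "Zpd p d = product_group {..<d} (\<lambda>_. integer_mod_group p)"

end

theory Submission
  imports Defs "HOL-Number_Theory.Number_Theory"
begin

text \<open>Write the given elements in coordinates as vectors v_1, ..., v_T of Z_p^d and
  put S = A \<union> {0}; a zero-sum with weights in A is a nonzero c \<in> S^T with
  \<Sum>_i c_i v_i = 0. If there were none, the integer polynomial
  F(x) = (\<Prod>_i \<Prod>_b (b - x_i)) * \<Prod>_j (1 - L_j(x)^(p-1)), where b ranges over
  {0, ..., p - 1} - S and L_j(x) = \<Sum>_i x_i v_ij, would by Fermat's little theorem
  vanish modulo p on the box {0, ..., p - 1}^T except at the origin, where it is a
  unit. But F has degree T (p - |S|) + d (p - 1) < T (p - 1) once T |A| > d (p - 1),
  and the sum over the box of such a polynomial is divisible by p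
  (Chevalley--Warning).\<close>

lemma fermat_theorem_int:
  fixes a :: int
  assumes "Factorial_Ring.prime p" and "\<not> int p dvd a"
  shows "[a ^ (p - 1) = 1] (mod int p)"
proof -
  interpret residues_prime p "residue_ring (int p)"
    by unfold_locales (rule assms(1))
  have "coprime a (int p)"
    using assms prime_imp_coprime[of "int p" a] by (simp add: coprime_commute)
  then show ?thesis
    using euler_theorem totient_prime[OF assms(1)] by simp
qed

lemma sum_powers_residues_dvd:
  assumes "Factorial_Ring.prime p" and "e < p - 1"
  shows "int p dvd (\<Sum>y\<in>{0..<int p}. y ^ e)"
proof (cases "e = 0")
  case True
  then show ?thesis by simp
next
  case False
  obtain g where g: "g \<in> totatives p" "ord p g = p - 1"
    using residue_prime_has_primroot[OF assms(1)] by blast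
  have cop: "coprime (int g) (int p)"
    using g(1) by (simp add: totatives_def)
  define f where "f y = (int g * y) mod int p" for y
  have inj: "inj_on f {0..<int p}"
  proof
    fix x y assume xy: "x \<in> {0..<int p}" "y \<in> {0..<int p}" "f x = f y"
    then have "[int g * x = int g * y] (mod int p)" by (simp add: f_def cong_def)
    then have "[x = y] (mod int p)" using cop by (simp add: cong_mult_lcancel)
    then show "x = y" using xy by (simp add: cong_def)
  qed
  have "f ` {0..<int p} = {0..<int p}"
    using assms(1) by (intro endo_inj_surj inj) (auto simp: f_def prime_gt_0_nat)
  then have "(\<Sum>y\<in>{0..<int p}. y ^ e) = (\<Sum>y\<in>{0..<int p}. f y ^ e)"
    using sum.reindex[OF inj, of "\<lambda>y. y ^ e"] by simp
  also have "[\<dots> = (\<Sum>y\<in>{0..<int p}. int g ^ e * y ^ e)] (mod int p)"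
    by (rule cong_sum) (simp add: f_def cong_def power_mod power_mult_distrib)
  finally have "int p dvd (int g ^ e - 1) * (\<Sum>y\<in>{0..<int p}. y ^ e)"
    by (simp add: sum_distrib_left[symmetric] left_diff_distrib cong_iff_dvd_diff dvd_diff_commute)
  moreover have "\<not> int p dvd int g ^ e - 1"
  proof
    assume "int p dvd int g ^ e - 1"
    then have "[g ^ e = 1] (mod p)"
      by (metis cong_iff_dvd_diff cong_int_iff of_nat_1 of_nat_power)
    then have "p - 1 dvd e" using g(2) ord_divides by metis
    then show False using False assms(2) by (simp add: nat_dvd_not_less)
  qed
  ultimately show ?thesis
    using assms(1) by (simp add: prime_dvd_mult_iff)
qed

text \<open>Integer polynomials of total degree at most N in the variables x 0, ..., x (t - 1),
  represented by the functions they induce, as sums of monomials.\<close>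
inductive polyfun_deg_le :: "nat \<Rightarrow> nat \<Rightarrow> ((nat \<Rightarrow> int) \<Rightarrow> int) \<Rightarrow> bool"
  for t N where
  zero: "polyfun_deg_le t N (\<lambda>x. 0)"
| add_monom: "(\<Sum>i<t. e i) \<le> N \<Longrightarrow> polyfun_deg_le t N f \<Longrightarrow>
    polyfun_deg_le t N (\<lambda>x. c * (\<Prod>i<t. x i ^ e i) + f x)"

lemma polyfun_deg_le_monom:
  "(\<Sum>i<t. e i) \<le> N \<Longrightarrow> polyfun_deg_le t N (\<lambda>x. c * (\<Prod>i<t. x i ^ e i))"
  using polyfun_deg_le.add_monom[OF _ polyfun_deg_le.zero] by simp

lemma polyfun_deg_le_const: "polyfun_deg_le t N (\<lambda>x. c)"
  using polyfun_deg_le_monom[where e="\<lambda>_. 0"] by simp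

lemma polyfun_deg_le_var:
  assumes "i < t" and "1 \<le> N"
  shows "polyfun_deg_le t N (\<lambda>x. x i)"
proof -
  define e where "e j = (if j = i then 1 else 0 :: nat)" for j
  have "(\<Prod>j<t. x j ^ e j) = x i" for x :: "nat \<Rightarrow> int"
    using assms(1) by (simp add: e_def if_distrib cong: if_cong)
  moreover have "(\<Sum>j<t. e j) \<le> N" using assms by (simp add: e_def)
  ultimately show ?thesis using polyfun_deg_le_monom[of e t N 1] by simp
qed

lemma polyfun_deg_le_add:
  "polyfun_deg_le t N f \<Longrightarrow> polyfun_deg_le t N g \<Longrightarrow> polyfun_deg_le t N (\<lambda>x. f x + g x)"
proof (induction rule: polyfun_deg_le.induct)
  case zero
  then show ?case by simp
next
  case (add_monom e f c)
  then show ?case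
    using polyfun_deg_le.add_monom[where f="\<lambda>x. f x + g x"] by (simp add: add.assoc)
qed

lemma polyfun_deg_le_mult_monom:
  assumes "polyfun_deg_le t N f" and "(\<Sum>i<t. e i) \<le> M"
  shows "polyfun_deg_le t (N + M) (\<lambda>x. f x * (c * (\<Prod>i<t. x i ^ e i)))"
  using assms(1)
proof (induction rule: polyfun_deg_le.induct)
  case zero
  then show ?case by (simp add: polyfun_deg_le.zero)
next
  case (add_monom e' f c')
  have "(\<Sum>i<t. e' i + e i) \<le> N + M"
    using add_monom.hyps(1) assms(2) by (simp add: sum.distrib)
  then have "polyfun_deg_le t (N + M) (\<lambda>x. (c' * c) * (\<Prod>i<t. x i ^ (e' i + e i)))"
    by (rule polyfun_deg_le_monom)
  from polyfun_deg_le_add[OF this add_monom.IH] show ?case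
    by (simp add: algebra_simps power_add prod.distrib)
qed

lemma polyfun_deg_le_mult:
  assumes "polyfun_deg_le t N f" and "polyfun_deg_le t M g"
  shows "polyfun_deg_le t (N + M) (\<lambda>x. f x * g x)"
  using assms(2)
proof (induction rule: polyfun_deg_le.induct)
  case zero
  then show ?case by (simp add: polyfun_deg_le.zero)
next
  case (add_monom e g c)
  from polyfun_deg_le_add[OF polyfun_deg_le_mult_monom[OF assms(1) add_monom.hyps(1)] add_monom.IH]
  show ?case by (simp add: distrib_left)
qed

lemma polyfun_deg_le_sum:
  "finite I \<Longrightarrow> (\<And>i. i \<in> I \<Longrightarrow> polyfun_deg_le t N (f i)) \<Longrightarrow>
    polyfun_deg_le t N (\<lambda>x. \<Sum>i\<in>I. f i x)"
  by (induction I rule: finite_induct) (auto intro: polyfun_deg_le.zero polyfun_deg_le_add)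

lemma polyfun_deg_le_prod:
  "finite I \<Longrightarrow> (\<And>i. i \<in> I \<Longrightarrow> polyfun_deg_le t N (f i)) \<Longrightarrow>
    polyfun_deg_le t (card I * N) (\<lambda>x. \<Prod>i\<in>I. f i x)"
  by (induction I rule: finite_induct) (auto intro: polyfun_deg_le_const polyfun_deg_le_mult)

lemma polyfun_deg_le_power:
  "polyfun_deg_le t N f \<Longrightarrow> polyfun_deg_le t (k * N) (\<lambda>x. f x ^ k)"
  by (induction k) (auto intro: polyfun_deg_le_const polyfun_deg_le_mult)

lemma polyfun_deg_le_diff:
  assumes "polyfun_deg_le t N f" and "polyfun_deg_le t N g"
  shows "polyfun_deg_le t N (\<lambda>x. f x - g x)"
proof -
  have "polyfun_deg_le t (0 + N) (\<lambda>x. -1 * g x)"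
    by (rule polyfun_deg_le_mult[OF polyfun_deg_le_const assms(2)])
  from polyfun_deg_le_add[OF assms(1), OF this[simplified]] show ?thesis by simp
qed

lemma polyfun_deg_le_linear: "polyfun_deg_le t 1 (\<lambda>x. \<Sum>i<t. x i * w i)"
proof (intro polyfun_deg_le_sum)
  fix i assume "i \<in> {..<t}"
  then have "polyfun_deg_le t (1 + 0) (\<lambda>x. x i * w i)"
    by (intro polyfun_deg_le_mult polyfun_deg_le_var polyfun_deg_le_const) auto
  then show "polyfun_deg_le t 1 (\<lambda>x. x i * w i)" by simp
qed simp

lemma polyfun_deg_le_prod_diff:
  assumes "finite B"
  shows "polyfun_deg_le t (t * card B) (\<lambda>x. \<Prod>i<t. \<Prod>b\<in>B. b - x i)"
proof -
  have "polyfun_deg_le t (card B * 1) (\<lambda>x. \<Prod>b\<in>B. b - x i)" if "i < t" for i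
    using that assms
    by (intro polyfun_deg_le_prod polyfun_deg_le_diff polyfun_deg_le_var polyfun_deg_le_const) auto
  then show ?thesis
    using polyfun_deg_le_prod[of "{..<t}" t "card B * 1"] by simp
qed

lemma sum_monomial_residue_box_dvd:
  assumes "Factorial_Ring.prime p" and "(\<Sum>i<t. e i) < t * (p - 1)"
  shows "int p dvd (\<Sum>x\<in>{..<t} \<rightarrow>\<^sub>E {0..<int p}. \<Prod>i<t. x i ^ e i)"
proof -
  obtain k where k: "k < t" "e k < p - 1"
  proof (rule ccontr)
    assume "\<not> thesis"
    then have "\<forall>i\<in>{..<t}. p - 1 \<le> e i" using that by force
    then have "t * (p - 1) \<le> (\<Sum>i<t. e i)"
      using sum_bounded_below[of "{..<t}" "p - 1" e] by (simp add: mult.commute)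
    then show False using assms(2) by simp
  qed
  have "(\<Sum>y\<in>{0..<int p}. y ^ e k) dvd (\<Prod>i<t. \<Sum>y\<in>{0..<int p}. y ^ e i)"
    using k(1) by (intro dvd_prodI) auto
  then have "int p dvd (\<Prod>i<t. \<Sum>y\<in>{0..<int p}. y ^ e i)"
    using sum_powers_residues_dvd[OF assms(1) k(2)] by (rule dvd_trans[rotated])
  then show ?thesis
    by (subst prod_sum_PiE[symmetric]) auto
qed

lemma polyfun_sum_residue_box_dvd:
  assumes "Factorial_Ring.prime p" and "polyfun_deg_le t N f" and "N < t * (p - 1)"
  shows "int p dvd (\<Sum>x\<in>{..<t} \<rightarrow>\<^sub>E {0..<int p}. f x)"
  using assms(2)
proof (induction rule: polyfun_deg_le.induct)
  case zero
  then show ?case by simp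
next
  case (add_monom e f c)
  have "int p dvd (\<Sum>x\<in>{..<t} \<rightarrow>\<^sub>E {0..<int p}. \<Prod>i<t. x i ^ e i)"
    using add_monom.hyps(1) assms(3) by (intro sum_monomial_residue_box_dvd[OF assms(1)]) simp
  then show ?case
    using add_monom.IH by (simp add: sum.distrib sum_distrib_left[symmetric])
qed

lemma polyfun_dvd_at_origin:
  assumes "Factorial_Ring.prime p" and "polyfun_deg_le t N f" and "N < t * (p - 1)"
    and "\<And>x. x \<in> {..<t} \<rightarrow>\<^sub>E {0..<int p} \<Longrightarrow> x \<noteq> (\<lambda>i\<in>{..<t}. 0) \<Longrightarrow> int p dvd f x"
  shows "int p dvd f (\<lambda>i\<in>{..<t}. 0)"
proof -
  let ?box = "{..<t} \<rightarrow>\<^sub>E {0..<int p}" and ?origin = "\<lambda>i\<in>{..<t}. 0 :: int"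
  have "?origin \<in> ?box"
    using prime_gt_0_nat[OF assms(1)] by auto
  then have "(\<Sum>x\<in>?box. f x) = f ?origin + (\<Sum>x\<in>?box - {?origin}. f x)"
    by (simp add: sum.remove finite_PiE)
  moreover have "int p dvd (\<Sum>x\<in>?box - {?origin}. f x)"
    using assms(4) by (intro dvd_sum) auto
  ultimately show ?thesis
    using polyfun_sum_residue_box_dvd[OF assms(1-3)] by (simp add: dvd_add_left_iff)
qed

lemma prime_not_dvd_prod_residues:
  assumes "Factorial_Ring.prime p" and "B \<subseteq> {0<..<int p}"
  shows "\<not> int p dvd (\<Prod>b\<in>B. b)"
proof
  assume "int p dvd (\<Prod>b\<in>B. b)"
  moreover have "finite B" using finite_subset[OF assms(2)] by simp
  ultimately obtain b where "b \<in> B" and "int p dvd b"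
    using assms(1) by (auto simp: prime_dvd_prod_iff)
  with assms(2) show False by (auto simp: zdvd_not_zless)
qed

definition zero_sum_poly ::
    "nat \<Rightarrow> int set \<Rightarrow> (nat \<Rightarrow> nat \<Rightarrow> int) \<Rightarrow> nat \<Rightarrow> nat \<Rightarrow> (nat \<Rightarrow> int) \<Rightarrow> int" where
  "zero_sum_poly p S v T d x =
    (\<Prod>i<T. \<Prod>b\<in>{0..<int p} - S. b - x i) * (\<Prod>j<d. 1 - (\<Sum>i<T. x i * v i j) ^ (p - 1))"

lemma polyfun_deg_le_zero_sum_poly:
  "polyfun_deg_le T (T * card ({0..<int p} - S) + d * (p - 1)) (zero_sum_poly p S v T d)"
proof -
  have "polyfun_deg_le T ((p - 1) * 1) (\<lambda>x. 1 - (\<Sum>i<T. x i * v i j) ^ (p - 1))" for j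
    by (intro polyfun_deg_le_diff polyfun_deg_le_const polyfun_deg_le_power polyfun_deg_le_linear)
  then have "polyfun_deg_le T (d * (p - 1)) (\<lambda>x. \<Prod>j<d. 1 - (\<Sum>i<T. x i * v i j) ^ (p - 1))"
    using polyfun_deg_le_prod[of "{..<d}" T] by simp
  with polyfun_deg_le_prod_diff[of "{0..<int p} - S" T] show ?thesis
    unfolding zero_sum_poly_def[abs_def] by (intro polyfun_deg_le_mult) auto
qed

lemma zero_sum_poly_dvd:
  assumes "Factorial_Ring.prime p" and x: "x \<in> {..<T} \<rightarrow>\<^sub>E {0..<int p}"
    and no_zero_sum: "x \<in> {..<T} \<rightarrow>\<^sub>E S \<Longrightarrow> \<exists>j<d. \<not> int p dvd (\<Sum>i<T. x i * v i j)"
  shows "int p dvd zero_sum_poly p S v T d x"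
proof (cases "x \<in> {..<T} \<rightarrow>\<^sub>E S")
  case False
  then obtain i where "i < T" and "x i \<in> {0..<int p} - S"
    using x by (auto simp: PiE_iff)
  then have "(\<Prod>i<T. \<Prod>b\<in>{0..<int p} - S. b - x i) = 0"
    by (auto intro!: prod_zero)
  then show ?thesis by (simp only: zero_sum_poly_def mult_zero_left dvd_0_right)
next
  case True
  then obtain j where "j < d" and "\<not> int p dvd (\<Sum>i<T. x i * v i j)"
    using no_zero_sum by blast
  then have "int p dvd 1 - (\<Sum>i<T. x i * v i j) ^ (p - 1)"
    using fermat_theorem_int[OF assms(1)] by (simp add: cong_iff_dvd_diff dvd_diff_commute)
  also have "\<dots> dvd (\<Prod>j<d. 1 - (\<Sum>i<T. x i * v i j) ^ (p - 1))"
    using \<open>j < d\<close> by (intro dvd_prodI) auto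
  finally show ?thesis by (simp add: zero_sum_poly_def)
qed

lemma zero_sum_poly_origin:
  assumes "p > 1"
  shows "zero_sum_poly p S v T d (\<lambda>i\<in>{..<T}. 0) = (\<Prod>b\<in>{0..<int p} - S. b) ^ T"
  using assms by (simp add: zero_sum_poly_def power_0_left)

lemma restricted_solution_linear_congruences:
  fixes v :: "nat \<Rightarrow> nat \<Rightarrow> int" and S :: "int set"
  assumes p: "Factorial_Ring.prime p" and "0 \<in> S" and S: "S \<subseteq> {0..<int p}"
    and deg: "d * (p - 1) < T * (card S - 1)"
  shows "\<exists>c\<in>{..<T} \<rightarrow>\<^sub>E S. (\<exists>i<T. c i \<noteq> 0) \<and> (\<forall>j<d. int p dvd (\<Sum>i<T. c i * v i j))"
proof (rule ccontr)
  assume no_solution: "\<not> ?thesis"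
  let ?B = "{0..<int p} - S" and ?origin = "\<lambda>i\<in>{..<T}. 0 :: int"
  have p1: "p > 1" using p prime_gt_1_nat by blast
  have "T * card ?B + d * (p - 1) < T * (p - 1)"
  proof -
    have "1 \<le> card S" "card S \<le> p"
      using card_mono[OF _ S] \<open>0 \<in> S\<close> finite_subset[OF S] by (auto simp: Suc_le_eq card_gt_0_iff)
    then have "(p - card S) + (card S - 1) = p - 1" by simp
    then have "T * (p - card S) + T * (card S - 1) = T * (p - 1)"
      by (metis distrib_left)
    moreover have "card ?B = p - card S"
      using S by (simp add: card_Diff_subset finite_subset)
    ultimately show ?thesis using deg by simp
  qed
  moreover have "int p dvd zero_sum_poly p S v T d x"
    if x: "x \<in> {..<T} \<rightarrow>\<^sub>E {0..<int p}" "x \<noteq> ?origin" for x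
  proof (rule zero_sum_poly_dvd[OF p x(1)])
    assume "x \<in> {..<T} \<rightarrow>\<^sub>E S"
    moreover have "\<exists>i<T. x i \<noteq> 0"
    proof (rule ccontr)
      assume "\<not> ?thesis"
      then have "x = ?origin"
        using p1 by (intro PiE_ext[OF x(1)]) auto
      with x(2) show False ..
    qed
    ultimately show "\<exists>j<d. \<not> int p dvd (\<Sum>i<T. x i * v i j)"
      using no_solution by auto
  qed
  ultimately have "int p dvd zero_sum_poly p S v T d ?origin"
    by (rule polyfun_dvd_at_origin[OF p polyfun_deg_le_zero_sum_poly])
  then have "int p dvd (\<Prod>b\<in>?B. b)"
    using p p1 by (simp add: zero_sum_poly_origin prime_dvd_power)
  moreover have "?B \<subseteq> {0<..<int p}"
    using \<open>0 \<in> S\<close> by (auto simp: order_le_less)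
  ultimately show False
    using prime_not_dvd_prod_residues[OF p] by blast
qed

lemma
  assumes "p > 0"
  shows group_Zpd: "group (Zpd p d)"
    and one_Zpd: "\<one>\<^bsub>Zpd p d\<^esub> = (\<lambda>j\<in>{..<d}. 0)"
    and mult_Zpd: "x \<otimes>\<^bsub>Zpd p d\<^esub> y = (\<lambda>j\<in>{..<d}. (x j + y j) mod int p)"
  using assms by (auto simp: Zpd_def carrier_integer_mod_group)

lemma hom_Zpd_pow:
  assumes "group G" and "h \<in> hom G (Zpd p d)" and "p > 0" and "g \<in> carrier G"
  shows "h (g [^]\<^bsub>G\<^esub> n) = (\<lambda>j\<in>{..<d}. (int n * h g j) mod int p)"
proof (induction n)
  case 0
  show ?case
    using hom_one[OF assms(2,1) group_Zpd[OF assms(3)]] by (simp add: one_Zpd[OF assms(3)])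
next
  case (Suc n)
  interpret G: group G by (fact assms(1))
  have "h (g [^]\<^bsub>G\<^esub> Suc n) = h (g [^]\<^bsub>G\<^esub> n) \<otimes>\<^bsub>Zpd p d\<^esub> h g"
    using assms(2,4) by (simp add: hom_mult)
  also have "\<dots> = (\<lambda>j\<in>{..<d}. (int (Suc n) * h g j) mod int p)"
    unfolding mult_Zpd[OF assms(3)] Suc
    by (rule restrict_ext) (simp add: mod_add_right_eq algebra_simps)
  finally show ?case .
qed

lemma hom_Zpd_finprod:
  assumes "comm_group G" and "h \<in> hom G (Zpd p d)" and "p > 0"
    and "finite I" and "f \<in> I \<rightarrow> carrier G"
  shows "h (finprod G f I) = (\<lambda>j\<in>{..<d}. (\<Sum>i\<in>I. h (f i) j) mod int p)"
  using assms(4,5)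
proof (induction I rule: finite_induct)
  case empty
  interpret G: comm_group G by (fact assms(1))
  show ?case
    using hom_one[OF assms(2) G.is_group group_Zpd[OF assms(3)]] by (simp add: one_Zpd[OF assms(3)])
next
  case (insert i I)
  interpret G: comm_group G by (fact assms(1))
  have "h (finprod G f (insert i I)) = h (f i) \<otimes>\<^bsub>Zpd p d\<^esub> h (finprod G f I)"
    using insert assms(2) by (simp add: hom_mult)
  also have "\<dots> = (\<lambda>j\<in>{..<d}. (\<Sum>i\<in>insert i I. h (f i) j) mod int p)"
    unfolding mult_Zpd[OF assms(3)] insert.IH[OF conjunct1[OF insert.prems[simplified]]]
    by (rule restrict_ext) (simp add: insert.hyps mod_add_right_eq)
  finally show ?case .
qed

lemma dA_le:
  assumes "1 \<le> T"
    and "\<And>g. g \<in> {..<T} \<rightarrow> carrier G \<Longrightarrow> \<exists>I. I \<subseteq> {..<T} \<and> I \<noteq> {} \<and>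
           (\<exists>a \<in> I \<rightarrow> A. finprod G (\<lambda>i. g i [^]\<^bsub>G\<^esub> a i) I = \<one>\<^bsub>G\<^esub>)"
  shows "dA A G \<le> T"
  unfolding dA_def using assms by (intro Least_le) blast

lemma iso_Zpd_finprod_pow_eq_one:
  assumes "comm_group G" and h: "h \<in> iso G (Zpd p d)" and p0: "p > 0"
    and "finite I" and gI: "g \<in> I \<rightarrow> carrier G"
    and zero_sum: "\<forall>j<d. int p dvd (\<Sum>i\<in>I. int (a i) * h (g i) j)"
  shows "finprod G (\<lambda>i. g i [^]\<^bsub>G\<^esub> a i) I = \<one>\<^bsub>G\<^esub>"
proof -
  interpret G: comm_group G by (fact assms(1))
  have hom: "h \<in> hom G (Zpd p d)" and inj: "inj_on h (carrier G)"
    using h unfolding iso_def bij_betw_def by auto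
  have "h (finprod G (\<lambda>i. g i [^]\<^bsub>G\<^esub> a i) I)
      = (\<lambda>j\<in>{..<d}. (\<Sum>i\<in>I. h (g i [^]\<^bsub>G\<^esub> a i) j) mod int p)"
    using gI by (intro hom_Zpd_finprod[OF assms(1) hom p0 \<open>finite I\<close>]) auto
  also have "\<dots> = (\<lambda>j\<in>{..<d}. (\<Sum>i\<in>I. int (a i) * h (g i) j) mod int p)"
  proof (rule restrict_ext)
    fix j assume "j \<in> {..<d}"
    then have "h (g i [^]\<^bsub>G\<^esub> a i) j = int (a i) * h (g i) j mod int p" if "i \<in> I" for i
      by (simp add: hom_Zpd_pow[OF G.is_group hom p0 funcset_mem[OF gI that]])
    then have "(\<Sum>i\<in>I. h (g i [^]\<^bsub>G\<^esub> a i) j) mod int p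
        = (\<Sum>i\<in>I. int (a i) * h (g i) j mod int p) mod int p"
      by (simp cong: sum.cong)
    also have "\<dots> = (\<Sum>i\<in>I. int (a i) * h (g i) j) mod int p"
      by (rule mod_sum_eq)
    finally show "(\<Sum>i\<in>I. h (g i [^]\<^bsub>G\<^esub> a i) j) mod int p
        = (\<Sum>i\<in>I. int (a i) * h (g i) j) mod int p" .
  qed
  also have "\<dots> = (\<lambda>j\<in>{..<d}. 0)"
    using zero_sum by (intro restrict_ext) simp
  also have "\<dots> = h \<one>\<^bsub>G\<^esub>"
    using hom_one[OF hom G.is_group group_Zpd[OF p0]] by (simp add: one_Zpd[OF p0])
  finally show ?thesis
    by (rule inj_onD[OF inj]) (use gI in \<open>auto intro!: G.finprod_closed\<close>)
qed

lemma dA_Zpd_le: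
  fixes G :: "('g, 'b) monoid_scheme" and A :: "nat set"
  assumes p: "Factorial_Ring.prime p" and "comm_group G" and "G \<cong> Zpd p d"
    and A: "A \<subseteq> {1..p-1}" and "1 \<le> T" and deg: "d * (p - 1) < T * card A"
  shows "dA A G \<le> T"
proof (rule dA_le[OF \<open>1 \<le> T\<close>])
  have p0: "p > 0" using p prime_gt_0_nat by blast
  obtain h where h: "h \<in> iso G (Zpd p d)" using \<open>G \<cong> Zpd p d\<close> unfolding is_iso_def by blast
  fix g assume g: "g \<in> {..<T} \<rightarrow> carrier G"
  let ?S = "insert 0 (int ` A)"
  have "0 \<notin> int ` A" and "finite A"
    using A by (auto intro: finite_subset)
  then have "card ?S - 1 = card A" by (simp add: card_image)
  with deg have deg_S: "d * (p - 1) < T * (card ?S - 1)" by simp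
  have "int a \<in> {0..<int p}" if "a \<in> A" for a
    using subsetD[OF A that] p0 by auto
  then have S_residues: "?S \<subseteq> {0..<int p}" using p0 by auto
  obtain c where c: "c \<in> {..<T} \<rightarrow>\<^sub>E ?S" "\<exists>i<T. c i \<noteq> 0"
      and zero_sum: "\<forall>j<d. int p dvd (\<Sum>i<T. c i * h (g i) j)"
    using restricted_solution_linear_congruences[OF p insertI1 S_residues deg_S,
        where v = "\<lambda>i j. h (g i) j"] by (elim bexE conjE)
  define I where "I = {i \<in> {..<T}. c i \<noteq> 0}"
  define a where "a i = nat (c i)" for i
  have "I \<subseteq> {..<T}" "I \<noteq> {}" "finite I" using c(2) by (auto simp: I_def)
  have a: "a \<in> I \<rightarrow> A" and c_a: "\<And>i. i \<in> I \<Longrightarrow> c i = int (a i)"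
    using c(1) by (auto simp: I_def a_def PiE_iff)
  have "(\<Sum>i\<in>I. int (a i) * h (g i) j) = (\<Sum>i<T. c i * h (g i) j)" for j
  proof -
    have "(\<Sum>i\<in>I. int (a i) * h (g i) j) = (\<Sum>i\<in>I. c i * h (g i) j)"
      by (intro sum.cong) (simp_all add: c_a)
    also have "\<dots> = (\<Sum>i<T. c i * h (g i) j)"
      by (rule sum.mono_neutral_left) (auto simp: I_def)
    finally show ?thesis .
  qed
  with zero_sum g \<open>I \<subseteq> {..<T}\<close> have "finprod G (\<lambda>i. g i [^]\<^bsub>G\<^esub> a i) I = \<one>\<^bsub>G\<^esub>"
    by (intro iso_Zpd_finprod_pow_eq_one[OF assms(2) h p0 \<open>finite I\<close>]) auto
  then show "\<exists>I. I \<subseteq> {..<T} \<and> I \<noteq> {} \<and>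
           (\<exists>a \<in> I \<rightarrow> A. finprod G (\<lambda>i. g i [^]\<^bsub>G\<^esub> a i) I = \<one>\<^bsub>G\<^esub>)"
    using \<open>I \<subseteq> {..<T}\<close> \<open>I \<noteq> {}\<close> a by blast
qed

theorem corollary1p1:
  fixes G :: "('g, 'b) monoid_scheme" and p d :: nat and A :: "nat set"
  assumes "Factorial_Ring.prime p" and "d \<ge> 1"
    and "comm_group G" and "G \<cong> Zpd p d"
    and "A \<subseteq> {1..p-1}" and "A \<noteq> {}"
  shows "int (dA A G) \<le> \<lceil>real (d * (p - 1) + 1) / real (card A)\<rceil>"
proof -
  define T where "T = nat \<lceil>real (d * (p - 1) + 1) / real (card A)\<rceil>"
  have "card A > 0"
    using assms(5,6) by (auto simp: card_gt_0_iff intro: finite_subset)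
  have "real (d * (p - 1) + 1) / real (card A) \<le> real T"
    unfolding T_def by (rule real_nat_ceiling_ge)
  then have "real (d * (p - 1) + 1) \<le> real T * real (card A)"
    using \<open>card A > 0\<close> by (simp add: divide_le_eq)
  then have "d * (p - 1) < T * card A"
    by (metis Suc_eq_plus1 Suc_le_eq of_nat_le_iff of_nat_mult)
  moreover from this have "1 \<le> T" by (cases T) auto
  ultimately have "dA A G \<le> T"
    using dA_Zpd_le[OF assms(1,3,4,5)] by blast
  moreover have "0 \<le> real (d * (p - 1) + 1) / real (card A)" by simp
  then have "0 \<le> \<lceil>real (d * (p - 1) + 1) / real (card A)\<rceil>"
    by (metis ceiling_mono ceiling_zero)
  then have "int T = \<lceil>real (d * (p - 1) + 1) / real (card A)\<rceil>"
    unfolding T_def by (rule nat_0_le)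
  ultimately show ?thesis by linarith
qed

end
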